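(* The finitary group $F$ and the full isometry group $W$ of the rooted tree $X^*$ are layered and saturated.
   Context: $X$ is a finite alphabet with $|X|\ge2$, $\mathcal T=X^*$, $W=\mathrm{Aut}(\mathcal T)$. $\mathrm{Sym}(X)$ acts on $\mathcal T$ by $(x_1x_2\cdots x_n)^\pi=x_1^\pi x_2\cdots x_n$. For $v\in X^*$, $g\in W$: $v*g$ acts as $g$ on the subtree $v\mathcal T$ ($(vw)^{v*g}=vw^g$) and fixes other vertices; $g@v$ is the state, $(vw)^g=v^gw^{g@v}$. The finitary group is $F=\langle v*\pi: v\in X^*,\pi\in\mathrm{Sym}(X)\rangle$. $G\le W$ is layered if it is transitive on every $X^n$ and $x*G\le G$ for all $x\in X$; saturated if for every $n$ it contains a characteristic subgroup $H_n$ fixing $X^n$ with $\{h@v:h\in H_n\}$ transitive on each level of $\mathcal T$ for every $v\in X^n$. *)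

theory Defs
  imports "HOL-Algebra.Generated_Groups"
begin

text \<open>The tree X^* is modelled by words of type 'a list over a finite alphabet 'a;
the head of a list is the letter closest to the root. Automorphisms act on the right,
so the group product g h means "first g, then h".\<close>

definition tree_aut :: "('a list \<Rightarrow> 'a list) \<Rightarrow> bool" where
  "tree_aut g \<longleftrightarrow> bij g \<and> g [] = [] \<and> (\<forall>v x. \<exists>y. g (v @ [x]) = g v @ [y])"

definition W :: "('a list \<Rightarrow> 'a list) set" where
  "W = {g. tree_aut g}"

definition tgrp :: "('a list \<Rightarrow> 'a list) set \<Rightarrow> ('a list \<Rightarrow> 'a list) monoid" where
  "tgrp S = \<lparr>carrier = S, mult = (\<lambda>g h. h \<circ> g), one = id\<rparr>"

definition perm_act :: "('a \<Rightarrow> 'a) \<Rightarrow> 'a list \<Rightarrow> 'a list" where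
  "perm_act \<pi> u = (case u of [] \<Rightarrow> [] | x # w \<Rightarrow> \<pi> x # w)"

definition star :: "'a list \<Rightarrow> ('a list \<Rightarrow> 'a list) \<Rightarrow> 'a list \<Rightarrow> 'a list" where
  "star v g u = (if take (length v) u = v then v @ g (drop (length v) u) else u)"

text \<open>The state g@v: (vw)^g = v^g w^(g@v).\<close>
definition state :: "('a list \<Rightarrow> 'a list) \<Rightarrow> 'a list \<Rightarrow> 'a list \<Rightarrow> 'a list" where
  "state g v w = drop (length v) (g (v @ w))"

definition finitary :: "('a list \<Rightarrow> 'a list) set" where
  "finitary = generate (tgrp W) {star v (perm_act \<pi>) | v \<pi>. bij \<pi>}"

definition level_transitive :: "('a list \<Rightarrow> 'a list) set \<Rightarrow> bool" where
  "level_transitive S \<longleftrightarrow>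
     (\<forall>n u w. length u = n \<and> length w = n \<longrightarrow> (\<exists>g\<in>S. g u = w))"

definition layered :: "('a list \<Rightarrow> 'a list) set \<Rightarrow> bool" where
  "layered G \<longleftrightarrow> subgroup G (tgrp W) \<and> level_transitive G \<and>
     (\<forall>x. \<forall>g\<in>G. star [x] g \<in> G)"

definition characteristic :: "'g set \<Rightarrow> ('g, 'b) monoid_scheme \<Rightarrow> bool" where
  "characteristic H Gr \<longleftrightarrow> subgroup H Gr \<and> (\<forall>\<phi>\<in>iso Gr Gr. \<phi> ` H = H)"

definition saturated :: "('a list \<Rightarrow> 'a list) set \<Rightarrow> bool" where
  "saturated G \<longleftrightarrow> subgroup G (tgrp W) \<and>
     (\<forall>n. \<exists>H. characteristic H (tgrp G) \<and>
        (\<forall>h\<in>H. \<forall>u. length u = n \<longrightarrow> h u = u) \<and>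
        (\<forall>v. length v = n \<longrightarrow> level_transitive {state h v | h. h \<in> H}))"

end

theory Submission
  imports Defs "HOL-Combinatorics.Cycles" "HOL-Library.Sublist"
begin

text \<open>
  Both groups are level transitive (for \<open>F\<close>, combine \<open>x * g\<close> with a transposition
  at the root) and closed under the operations \<open>v * g\<close> and \<open>g @ v\<close>. Any such group \<open>G\<close> is
  saturated. For level \<open>n\<close> let \<open>E\<close> be the lcm of the cycle lengths of elements of \<open>G\<close>
  on \<open>X\<^sup>n\<close>, and \<open>H\<^sub>n\<close> the subgroup generated by all \<open>E\<close>-th powers: it is characteristic and
  fixes \<open>X\<^sup>n\<close>. Fix \<open>v \<in> X\<^sup>n\<close> and \<open>k \<in> G\<close>. If some \<open>c \<in> G\<close> has cycle length \<open>l\<close> at \<open>v\<close>, then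
  \<open>a = c \<circ> (v * s\<^sup>-\<^sup>1k)\<close> with \<open>s = c\<^sup>l @ v\<close> satisfies \<open>a\<^sup>l v = v\<close> and \<open>a\<^sup>l @ v = k\<close>, so \<open>k\<^bsup>E/l\<^esup>\<close>
  is the state of \<open>a\<^sup>E \<in> H\<^sub>n\<close> at \<open>v\<close>. The states at \<open>v\<close> of \<open>H\<^sub>n\<close> form a group, since \<open>H\<^sub>n\<close>
  fixes \<open>v\<close>, and the exponents \<open>E/l\<close> have gcd 1; hence every \<open>k \<in> G\<close> is such a state, and
  these states are level transitive because \<open>G\<close> is.
\<close>

text \<open>HOL-Algebra's syntax for group inverses hides HOL's \<open>inv\<close> on functions.\<close>
abbreviation fun_inv :: "('b \<Rightarrow> 'c) \<Rightarrow> 'c \<Rightarrow> 'b" where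
  "fun_inv f \<equiv> inv_into UNIV f"

section \<open>Periodic points, gcds and power subgroups\<close>

lemma funpow_returns_within_card:
  assumes "inj f" "finite S" "f ` S \<subseteq> S" "x \<in> S"
  shows "\<exists>l. 0 < l \<and> l \<le> card S \<and> (f ^^ l) x = x"
proof -
  have orbit: "(f ^^ i) x \<in> S" for i by (induction i) (use assms(3,4) in auto)
  have "card ((\<lambda>i. (f ^^ i) x) ` {0..card S}) \<le> card S"
    using orbit by (intro card_mono[OF assms(2)]) auto
  then have "\<not> inj_on (\<lambda>i. (f ^^ i) x) {0..card S}"
    using card_image by fastforce
  then obtain i j where "i < j" "j \<le> card S" "(f ^^ i) x = (f ^^ j) x"
    unfolding inj_on_def by (metis atLeastAtMost_iff linorder_neqE_nat)
  then show ?thesis using funpow_diff[OF assms(1)] by (intro exI[of _ "j - i"]) auto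
qed

lemma Gcd_Lcm_div_eq_1:
  fixes L :: "nat set"
  assumes "finite L" "L \<noteq> {}" "0 \<notin> L"
  shows "Gcd ((\<lambda>l. Lcm L div l) ` L) = 1"
proof -
  define E where "E = Lcm L"
  define d where "d = Gcd ((\<lambda>l. E div l) ` L)"
  have E0: "E \<noteq> 0" using assms by (simp add: E_def Lcm_0_iff)
  have lE: "l dvd E" if "l \<in> L" for l using that by (simp add: E_def dvd_Lcm)
  have dl: "l * d dvd E" if l: "l \<in> L" for l
  proof -
    have "d dvd E div l" using l by (auto simp: d_def intro: Gcd_dvd)
    moreover have "l \<noteq> 0" using l assms(3) by metis
    ultimately have "d * l dvd E" by (simp add: dvd_div_iff_mult lE[OF l])
    then show ?thesis by (simp add: mult.commute)
  qed
  obtain l0 where l0: "l0 \<in> L" using assms(2) by blast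
  then have "E div l0 \<noteq> 0" using lE E0 by (simp add: dvd_div_eq_0_iff)
  then have d0: "d \<noteq> 0" using l0 by (auto simp: d_def Gcd_0_iff)
  have dE: "d dvd E" using dl[OF l0] by (rule dvd_mult_right)
  have "E dvd E div d"
    unfolding E_def
  proof (rule Lcm_least)
    fix l assume "l \<in> L"
    then show "l dvd Lcm L div d"
      using dl by (simp add: E_def[symmetric] dvd_div_iff_mult[OF d0 dE])
  qed
  moreover have "E div d \<noteq> 0" using E0 dE by (simp add: dvd_div_eq_0_iff)
  ultimately have "E \<le> E div d" by (rule dvd_imp_le[OF _ neq0_conv[THEN iffD1]])
  have "d = 1"
  proof (rule ccontr)
    assume "d \<noteq> 1"
    with d0 have "E div d < E" using E0 by (intro div_less_dividend) auto
    with \<open>E \<le> E div d\<close> show False by simp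
  qed
  then show ?thesis by (simp add: d_def E_def)
qed

lemma (in group) int_pow_Gcd_mem_subgroup:
  assumes "subgroup T G" "x \<in> carrier G" "finite M" "\<And>m. m \<in> M \<Longrightarrow> x [^] (m::int) \<in> T"
  shows "x [^] Gcd M \<in> T"
  using assms(3,4)
proof (induction M rule: finite_induct)
  case empty then show ?case using subgroup.one_closed[OF assms(1)] by simp
next
  case (insert m M)
  obtain a b where "a * m + b * Gcd M = gcd m (Gcd M)" using bezout_int by blast
  then have "x [^] Gcd (insert m M) = x [^] (a * m + b * Gcd M)" by simp
  also have "\<dots> = (x [^] m) [^] a \<otimes> (x [^] Gcd M) [^] b"
    using assms(2) by (simp add: int_pow_mult int_pow_pow mult.commute)
  finally have "x [^] Gcd (insert m M) = (x [^] m) [^] a \<otimes> (x [^] Gcd M) [^] b" .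
  moreover have "x [^] m \<in> T" "x [^] Gcd M \<in> T" using insert by auto
  ultimately show ?case
    using subgroup_int_pow_closed[OF assms(1)] subgroup.m_closed[OF assms(1)] by simp
qed

lemma (in group) characteristic_generate_nat_pow:
  "characteristic (generate G {x [^] (e::nat) | x. x \<in> carrier G}) G"
proof -
  let ?S = "{x [^] e | x. x \<in> carrier G}"
  have S: "?S \<subseteq> carrier G" by auto
  have "\<phi> ` generate G ?S = generate G ?S" if \<phi>: "\<phi> \<in> iso G G" for \<phi>
  proof -
    interpret hom: group_hom G G \<phi>
      using \<phi> is_group by (simp add: group_hom_def group_hom_axioms_def iso_def)
    have surj: "\<phi> ` carrier G = carrier G" using \<phi> by (simp add: iso_def bij_betw_def)
    have "\<phi> ` ?S = ?S"
    proof
      show "\<phi> ` ?S \<subseteq> ?S" by (auto simp: hom.hom_nat_pow)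
      show "?S \<subseteq> \<phi> ` ?S"
      proof
        fix y assume "y \<in> ?S"
        then obtain x where x: "x \<in> carrier G" "y = x [^] e" by blast
        then obtain x' where x': "x' \<in> carrier G" "x = \<phi> x'" using surj by blast
        then have "y = \<phi> (x' [^] e)" using x by (simp add: hom.hom_nat_pow)
        with x' show "y \<in> \<phi> ` ?S" by blast
      qed
    qed
    then show ?thesis using hom.generate_img[OF S] by simp
  qed
  then show ?thesis unfolding characteristic_def using generate_is_subgroup[OF S] by blast
qed

section \<open>Tree automorphisms\<close>

lemma tree_aut_append_ex:
  assumes "tree_aut g"
  shows "\<exists>r. g (v @ w) = g v @ r \<and> length r = length w"
proof (induction w rule: rev_induct)
  case Nil then show ?case by simp
next
  case (snoc x w)
  then obtain r where r: "g (v @ w) = g v @ r" "length r = length w" by blast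
  from assms obtain y where "g ((v @ w) @ [x]) = g (v @ w) @ [y]" unfolding tree_aut_def by blast
  with r show ?case by (intro exI[of _ "r @ [y]"]) simp
qed

lemma length_tree_aut: "tree_aut g \<Longrightarrow> length (g v) = length v"
  using tree_aut_append_ex[of g "[]" v] by (auto simp: tree_aut_def)

lemma tree_aut_append: "tree_aut g \<Longrightarrow> g (v @ w) = g v @ state g v w"
  using tree_aut_append_ex[of g v w] length_tree_aut[of g v] by (auto simp: state_def)

lemma tree_aut_bij: "tree_aut g \<Longrightarrow> bij g"
  by (simp add: tree_aut_def)

lemma tree_aut_id: "tree_aut id"
  by (simp add: tree_aut_def)

lemma tree_aut_comp:
  assumes "tree_aut g" "tree_aut h" shows "tree_aut (g \<circ> h)"
  unfolding tree_aut_def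
proof (intro conjI allI)
  show "bij (g \<circ> h)" using assms by (simp add: tree_aut_def bij_comp)
  show "(g \<circ> h) [] = []" using assms by (simp add: tree_aut_def)
  fix v x
  obtain y where y: "h (v @ [x]) = h v @ [y]" using assms(2) by (auto simp: tree_aut_def)
  obtain z where "g (h v @ [y]) = g (h v) @ [z]" using assms(1) by (auto simp: tree_aut_def)
  with y show "\<exists>y. (g \<circ> h) (v @ [x]) = (g \<circ> h) v @ [y]" by auto
qed

lemma tree_aut_funpow: "tree_aut f \<Longrightarrow> tree_aut (f ^^ n)"
  by (induction n) (simp_all add: tree_aut_id tree_aut_comp)

text \<open>Finiteness of the alphabet is needed here: the children of a vertex are mapped
  injectively, hence onto, the children of its image.\<close>
lemma tree_aut_fun_inv:
  assumes "tree_aut (g :: 'a::finite list \<Rightarrow> 'a list)" shows "tree_aut (fun_inv g)"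
  unfolding tree_aut_def
proof (intro conjI allI)
  have b: "bij g" using assms by (rule tree_aut_bij)
  then show "bij (fun_inv g)" by (rule bij_imp_bij_inv)
  show "fun_inv g [] = []" using assms b by (metis bij_inv_eq_iff tree_aut_def)
  fix v x
  define v' where "v' = fun_inv g v"
  have gv': "g v' = v" using b by (simp add: v'_def bij_is_surj surj_f_inv_f)
  define child where "child z = last (g (v' @ [z]))" for z
  have g_child: "g (v' @ [z]) = v @ [child z]" for z
  proof -
    obtain y where "g (v' @ [z]) = g v' @ [y]" using assms by (auto simp: tree_aut_def)
    then show ?thesis by (simp add: child_def gv')
  qed
  have "inj child"
  proof (rule injI)
    fix a b assume "child a = child b"
    then have "g (v' @ [a]) = g (v' @ [b])" by (simp add: g_child)
    then show "a = b" using b by (simp add: bij_is_inj inj_eq)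
  qed
  then have "surj child" by (simp add: finite_UNIV_inj_surj)
  then obtain z where "child z = x" by (metis surjD)
  then have "fun_inv g (v @ [x]) = v' @ [z]" using b g_child by (metis bij_inv_eq_iff)
  then show "\<exists>y. fun_inv g (v @ [x]) = fun_inv g v @ [y]" by (simp add: v'_def)
qed

lemma tree_aut_comp_fun_inv:
  assumes "tree_aut g" shows "g \<circ> fun_inv g = id"
  using surj_iff[of g] bij_is_surj[OF tree_aut_bij[OF assms]] by simp

lemma tree_aut_fun_inv_comp:
  assumes "tree_aut g" shows "fun_inv g \<circ> g = id"
  by (simp add: assms bij_is_inj tree_aut_bij)

lemma tgrp_simps [simp]:
  "carrier (tgrp S) = S" "monoid.mult (tgrp S) g h = h \<circ> g" "one (tgrp S) = id"
  by (simp_all add: tgrp_def)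

lemma tgrp_restrict: "(tgrp W)\<lparr>carrier := G\<rparr> = tgrp G"
  by (simp add: tgrp_def)

lemma nat_pow_tgrp: "g [^]\<^bsub>tgrp S\<^esub> (n::nat) = g ^^ n"
  by (induction n) (simp_all add: funpow_Suc_right)

lemma group_tgrp_W: "group (tgrp (W :: ('a::finite list \<Rightarrow> 'a list) set))"
proof (rule groupI)
  fix g :: "'a list \<Rightarrow> 'a list"
  assume "g \<in> carrier (tgrp W)"
  then have g: "tree_aut g" by (simp add: W_def)
  then show "\<exists>h\<in>carrier (tgrp W). h \<otimes>\<^bsub>tgrp W\<^esub> g = \<one>\<^bsub>tgrp W\<^esub>"
    using tree_aut_fun_inv[OF g]
    by (intro bexI[of _ "fun_inv g"]) (simp_all add: W_def tree_aut_comp_fun_inv)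
qed (auto simp: W_def tree_aut_id tree_aut_comp comp_assoc)

lemma inv_tgrp_W: "g \<in> W \<Longrightarrow> inv\<^bsub>tgrp (W :: ('a::finite list \<Rightarrow> 'a list) set)\<^esub> g = fun_inv g"
  by (rule group.inv_equality[OF group_tgrp_W])
    (simp_all add: W_def tree_aut_fun_inv tree_aut_comp_fun_inv)

lemma subgroup_tgrp_WI:
  fixes G :: "('a::finite list \<Rightarrow> 'a list) set"
  assumes "\<And>g. g \<in> G \<Longrightarrow> tree_aut g" "id \<in> G"
    and "\<And>g h. g \<in> G \<Longrightarrow> h \<in> G \<Longrightarrow> g \<circ> h \<in> G" "\<And>g. g \<in> G \<Longrightarrow> fun_inv g \<in> G"
  shows "subgroup G (tgrp W)"
proof (rule group.subgroupI[OF group_tgrp_W])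
  show "G \<subseteq> carrier (tgrp W)" using assms(1) by (auto simp: W_def)
  show "inv\<^bsub>tgrp W\<^esub> g \<in> G" if "g \<in> G" for g
  proof -
    have "g \<in> W" using assms(1) that by (simp add: W_def)
    then show ?thesis using assms(4)[OF that] by (simp add: inv_tgrp_W)
  qed
  show "G \<noteq> {}" using assms(2) by blast
  show "g \<otimes>\<^bsub>tgrp W\<^esub> h \<in> G" if "g \<in> G" "h \<in> G" for g h
    using assms(3) that by simp
qed

lemma subgroup_tree_aut: "subgroup G (tgrp W) \<Longrightarrow> g \<in> G \<Longrightarrow> tree_aut g"
  using subgroup.subset by (fastforce simp: W_def)

lemma subgroup_id_closed: "subgroup G (tgrp W) \<Longrightarrow> id \<in> G"
  using subgroup.one_closed by fastforce

lemma subgroup_comp_closed: "subgroup G (tgrp W) \<Longrightarrow> g \<in> G \<Longrightarrow> h \<in> G \<Longrightarrow> g \<circ> h \<in> G"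
  using subgroup.m_closed[of G "tgrp W" h g] by simp

lemma subgroup_fun_inv_closed:
  assumes "subgroup G (tgrp (W :: ('a::finite list \<Rightarrow> 'a list) set))" "g \<in> G"
  shows "fun_inv g \<in> G"
proof -
  have "g \<in> W" using subgroup_tree_aut[OF assms] by (simp add: W_def)
  then show ?thesis using subgroup.m_inv_closed[OF assms] by (simp add: inv_tgrp_W)
qed

lemma subgroup_funpow_closed: "subgroup G (tgrp W) \<Longrightarrow> g \<in> G \<Longrightarrow> g ^^ n \<in> G"
  by (induction n) (simp_all add: subgroup_id_closed subgroup_comp_closed)

lemma group_tgrp_subgroup:
  "subgroup G (tgrp (W :: ('a::finite list \<Rightarrow> 'a list) set)) \<Longrightarrow> group (tgrp G)"
  using subgroup.subgroup_is_group[OF _ group_tgrp_W] by (metis tgrp_restrict)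

lemma subgroup_tgrp_of_subgroup:
  "subgroup G (tgrp (W :: ('a::finite list \<Rightarrow> 'a list) set)) \<Longrightarrow> subgroup K (tgrp W) \<Longrightarrow> K \<subseteq> G
    \<Longrightarrow> subgroup K (tgrp G)"
  using group.subgroup_incl[OF group_tgrp_W] by (metis tgrp_restrict)

lemma subgroup_tgrp_W_of_tgrp:
  "subgroup G (tgrp (W :: ('a::finite list \<Rightarrow> 'a list) set)) \<Longrightarrow> subgroup K (tgrp G)
    \<Longrightarrow> subgroup K (tgrp W)"
  using group.incl_subgroup[OF group_tgrp_W] by (metis tgrp_restrict)

lemma subgroup_level_stabilizer:
  fixes G :: "('a::finite list \<Rightarrow> 'a list) set"
  assumes G: "subgroup G (tgrp W)"
  shows "subgroup {h \<in> G. \<forall>u. length u = n \<longrightarrow> h u = u} (tgrp G)"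
proof (rule subgroup_tgrp_of_subgroup[OF G _ subsetI])
  show "subgroup {h \<in> G. \<forall>u. length u = n \<longrightarrow> h u = u} (tgrp W)"
  proof (rule subgroup_tgrp_WI)
    fix h assume "h \<in> {h \<in> G. \<forall>u. length u = n \<longrightarrow> h u = u}"
    then have h: "h \<in> G" "\<And>u. length u = n \<Longrightarrow> h u = u" by auto
    show "tree_aut h" by (rule subgroup_tree_aut[OF G h(1)])
    have "u = fun_inv h u" if "length u = n" for u
      using bij_inv_eq_iff[OF tree_aut_bij[OF subgroup_tree_aut[OF G h(1)]]] h(2)[OF that] by simp
    then show "fun_inv h \<in> {h \<in> G. \<forall>u. length u = n \<longrightarrow> h u = u}"
      using subgroup_fun_inv_closed[OF G h(1)] by simp
  qed (simp_all add: subgroup_id_closed[OF G] subgroup_comp_closed[OF G])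
qed simp

section \<open>The operators \<open>v * g\<close> and \<open>g @ v\<close>\<close>

lemma take_length_eq_iff_prefix: "take (length v) u = v \<longleftrightarrow> prefix v u"
  by (metis append_eq_conv_conj append_take_drop_id prefix_def)

lemma star_append [simp]: "star v g (v @ w) = v @ g w"
  by (simp add: star_def)

lemma star_not_prefix: "\<not> prefix v u \<Longrightarrow> star v g u = u"
  by (simp add: star_def take_length_eq_iff_prefix)

lemma star_Nil: "star [] g = g"
  by (simp add: star_def fun_eq_iff)

lemma star_comp: "star v g \<circ> star v h = star v (g \<circ> h)"
proof
  fix u show "(star v g \<circ> star v h) u = star v (g \<circ> h) u"
    by (cases "prefix v u") (auto elim: prefixE simp: star_not_prefix)
qed

lemma star_id: "star v id = id"
proof
  fix u show "star v id u = id u"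
    by (cases "prefix v u") (auto elim: prefixE simp: star_not_prefix)
qed

lemma star_star: "star u (star v g) = star (u @ v) g"
proof
  fix w
  consider r where "w = u @ v @ r" | r where "w = u @ r" "\<not> prefix v r" | "\<not> prefix u w"
    by (metis prefixE prefixI)
  then show "star u (star v g) w = star (u @ v) g w"
  proof cases
    case (1 r)
    then show ?thesis using star_append[of "u @ v" g r] by simp
  next
    case (3)
    then have "\<not> prefix (u @ v) w" using append_prefixD by blast
    with 3 show ?thesis by (simp add: star_not_prefix)
  qed (simp add: star_not_prefix)
qed

lemma tree_aut_star:
  assumes "tree_aut g" shows "tree_aut (star v g)"
  unfolding tree_aut_def
proof (intro conjI allI)
  have "star v g \<circ> star v (fun_inv g) = id" "star v (fun_inv g) \<circ> star v g = id"
    using assms by (simp_all add: star_comp star_id tree_aut_comp_fun_inv inv_o_cancel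
        bij_is_inj tree_aut_bij)
  then show "bij (star v g)" using o_bij by blast
  show "star v g [] = []" using assms by (cases v) (auto simp: star_def tree_aut_def)
  fix u x
  show "\<exists>y. star v g (u @ [x]) = star v g u @ [y]"
  proof (cases "prefix v u")
    case True
    then obtain r where u: "u = v @ r" by (auto elim: prefixE)
    obtain y where "g (r @ [x]) = g r @ [y]" using assms unfolding tree_aut_def by blast
    then show ?thesis by (simp add: u)
  next
    case False
    then show ?thesis
      using assms star_append[of "u @ [x]" g "[]"] by (cases "v = u @ [x]") (auto simp: star_not_prefix tree_aut_def)
  qed
qed

lemma fun_inv_star: "tree_aut g \<Longrightarrow> fun_inv (star v g) = star v (fun_inv g)"
  by (rule inv_unique_comp)
    (simp_all add: star_comp star_id tree_aut_comp_fun_inv inv_o_cancel bij_is_inj tree_aut_bij)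

lemma tree_aut_perm_act:
  assumes "bij \<pi>" shows "tree_aut (perm_act \<pi>)"
  unfolding tree_aut_def
proof (intro conjI allI)
  have "perm_act \<pi> \<circ> perm_act (fun_inv \<pi>) = id" "perm_act (fun_inv \<pi>) \<circ> perm_act \<pi> = id"
    using assms
    by (auto simp: fun_eq_iff perm_act_def bij_is_surj bij_is_inj surj_f_inv_f split: list.splits)
  then show "bij (perm_act \<pi>)" using o_bij by blast
  show "perm_act \<pi> [] = []" by (simp add: perm_act_def)
  fix v x show "\<exists>y. perm_act \<pi> (v @ [x]) = perm_act \<pi> v @ [y]"
    by (cases v) (auto simp: perm_act_def)
qed

lemma state_id: "state id v = id"
  by (simp add: fun_eq_iff state_def)

lemma state_comp:
  assumes "tree_aut g" "tree_aut h"
  shows "state (g \<circ> h) v = state g (h v) \<circ> state h v"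
proof
  fix w
  have "g (h (v @ w)) = g (h v) @ state g (h v) (state h v w)"
    by (simp add: tree_aut_append[OF assms(2)] tree_aut_append[OF assms(1)])
  moreover have "length (g (h v)) = length v"
    by (simp add: length_tree_aut[OF assms(1)] length_tree_aut[OF assms(2)])
  ultimately show "state (g \<circ> h) v w = (state g (h v) \<circ> state h v) w"
    by (simp add: state_def)
qed

lemma tree_aut_state:
  assumes "tree_aut (g :: 'a::finite list \<Rightarrow> 'a list)" shows "tree_aut (state g v)"
  unfolding tree_aut_def
proof (intro conjI allI)
  have g': "tree_aut (fun_inv g)" using tree_aut_fun_inv[OF assms] .
  have "fun_inv g (g v) = v" using assms by (simp add: tree_aut_bij bij_is_inj)
  then have "state g v \<circ> state (fun_inv g) (g v) = id" "state (fun_inv g) (g v) \<circ> state g v = id"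
    using state_comp[OF assms g', of "g v"] state_comp[OF g' assms, of v]
    by (simp_all add: tree_aut_comp_fun_inv[OF assms] tree_aut_fun_inv_comp[OF assms] state_id)
  then show "bij (state g v)" using o_bij by blast
  show "state g v [] = []" using length_tree_aut[OF assms, of v] by (simp add: state_def)
  fix w x
  obtain y where "g ((v @ w) @ [x]) = g (v @ w) @ [y]" using assms unfolding tree_aut_def by blast
  then have "g (v @ w @ [x]) = g v @ state g v w @ [y]" by (simp add: tree_aut_append[OF assms])
  then show "\<exists>y. state g v (w @ [x]) = state g v w @ [y]"
    by (simp add: state_def length_tree_aut[OF assms])
qed

lemma state_fun_inv:
  assumes "tree_aut (h :: 'a::finite list \<Rightarrow> 'a list)"
  shows "state (fun_inv h) v = fun_inv (state h (fun_inv h v))"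
proof (rule inv_unique_comp[symmetric])
  have h': "tree_aut (fun_inv h)" using tree_aut_fun_inv[OF assms] .
  have "h (fun_inv h v) = v" using assms by (simp add: tree_aut_bij bij_is_surj surj_f_inv_f)
  then show "state h (fun_inv h v) \<circ> state (fun_inv h) v = id"
    "state (fun_inv h) v \<circ> state h (fun_inv h v) = id"
    using state_comp[OF assms h', of v] state_comp[OF h' assms, of "fun_inv h v"]
    by (simp_all add: tree_aut_comp_fun_inv[OF assms] tree_aut_fun_inv_comp[OF assms] state_id)
qed

lemma state_funpow:
  assumes "tree_aut f" "f v = v"
  shows "state (f ^^ n) v = state f v ^^ n"
proof (induction n)
  case 0 then show ?case using state_id[of v] by (simp add: id_def)
next
  case (Suc n)
  have "(f ^^ n) v = v" using assms(2) by (induction n) simp_all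
  then have "state (f \<circ> f ^^ n) v = state f v \<circ> state f v ^^ n"
    using Suc state_comp[OF assms(1) tree_aut_funpow[OF assms(1)], of n v] by simp
  then show ?case by (simp only: funpow.simps(2))
qed

lemma state_star_below: "state (star u f) (u @ r) = state f r"
  by (simp add: fun_eq_iff state_def)

lemma state_star_above: "state (star (v @ r) f) v = star r f"
  by (simp add: fun_eq_iff state_def star_star[symmetric])

lemma state_star_apart:
  assumes "\<not> prefix u v" "\<not> prefix v u" shows "state (star u f) v = id"
proof -
  have "\<not> prefix u (v @ w)" for w using assms by (auto simp: prefix_append)
  then show ?thesis by (simp add: fun_eq_iff state_def star_not_prefix)
qed

lemma state_perm_act: "state (perm_act \<pi>) r = (if r = [] then perm_act \<pi> else id)"
  by (cases r) (auto simp: fun_eq_iff state_def perm_act_def split: list.splits)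

section \<open>The groups \<open>W\<close> and \<open>F\<close> are layered\<close>

abbreviation finitary_gens :: "('a list \<Rightarrow> 'a list) set" where
  "finitary_gens \<equiv> {star v (perm_act \<pi>) | v \<pi>. bij \<pi>}"

lemma finitary_gens_subset_W: "finitary_gens \<subseteq> W"
  by (auto simp: W_def intro!: tree_aut_star tree_aut_perm_act)

lemma subgroup_W: "subgroup (W :: ('a::finite list \<Rightarrow> 'a list) set) (tgrp W)"
  using group.subgroup_self[OF group_tgrp_W] by simp

lemma subgroup_finitary: "subgroup (finitary :: ('a::finite list \<Rightarrow> 'a list) set) (tgrp W)"
  unfolding finitary_def
  using group.generate_is_subgroup[OF group_tgrp_W] finitary_gens_subset_W by simp

lemma finitary_gens_subset_finitary: "finitary_gens \<subseteq> finitary"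
  unfolding finitary_def by (blast intro: generate.incl)

lemma finitary_gen_mem:
  "bij \<pi> \<Longrightarrow> star v (perm_act \<pi>) \<in> (finitary :: ('a::finite list \<Rightarrow> 'a list) set)"
  using finitary_gens_subset_finitary by blast

lemma finitary_subset:
  assumes "subgroup K (tgrp (W :: ('a::finite list \<Rightarrow> 'a list) set))" "finitary_gens \<subseteq> K"
  shows "finitary \<subseteq> K"
  unfolding finitary_def using group.generate_subgroup_incl[OF group_tgrp_W assms(2,1)] .

lemma subgroup_star_preimage:
  assumes "subgroup K (tgrp (W :: ('a::finite list \<Rightarrow> 'a list) set))"
  shows "subgroup {g \<in> W. star v g \<in> K} (tgrp W)"
  by (rule subgroup_tgrp_WI)
    (use assms in \<open>auto simp: W_def tree_aut_id tree_aut_comp tree_aut_fun_inv star_id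
      fun_inv_star[symmetric] star_comp[symmetric] subgroup_id_closed subgroup_comp_closed
      subgroup_fun_inv_closed\<close>)

lemma subgroup_state_preimage:
  assumes "subgroup K (tgrp (W :: ('a::finite list \<Rightarrow> 'a list) set))"
  shows "subgroup {g \<in> W. \<forall>v. state g v \<in> K} (tgrp W)"
  by (rule subgroup_tgrp_WI)
    (use assms in \<open>auto simp: W_def tree_aut_id tree_aut_comp tree_aut_fun_inv state_id
      state_comp state_fun_inv subgroup_id_closed subgroup_comp_closed subgroup_fun_inv_closed\<close>)

lemma finitary_subset_W: "finitary \<subseteq> (W :: ('a::finite list \<Rightarrow> 'a list) set)"
  using subgroup.subset[OF subgroup_finitary] by simp

lemma id_mem_finitary [simp]: "id \<in> (finitary :: ('a::finite list \<Rightarrow> 'a list) set)"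
  by (rule subgroup_id_closed[OF subgroup_finitary])

lemma star_mem_finitary:
  assumes "g \<in> (finitary :: ('a::finite list \<Rightarrow> 'a list) set)"
  shows "star v g \<in> finitary"
proof -
  have "star v (star u (perm_act \<pi>)) \<in> (finitary :: ('a list \<Rightarrow> 'a list) set)"
    if "bij \<pi>" for u and \<pi> :: "'a \<Rightarrow> 'a"
    using finitary_gens_subset_finitary that by (auto simp: star_star)
  then have "finitary \<subseteq> {g \<in> W. star v g \<in> (finitary :: ('a list \<Rightarrow> 'a list) set)}"
    using finitary_gens_subset_W
    by (intro finitary_subset[OF subgroup_star_preimage[OF subgroup_finitary]]) blast
  then show ?thesis using assms by blast
qed

lemma state_mem_finitary:
  assumes "g \<in> (finitary :: ('a::finite list \<Rightarrow> 'a list) set)"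
  shows "state g v \<in> finitary"
proof -
  have "state (star u (perm_act \<pi>)) v \<in> (finitary :: ('a list \<Rightarrow> 'a list) set)"
    if "bij \<pi>" for u v and \<pi> :: "'a \<Rightarrow> 'a"
  proof -
    note gen = finitary_gen_mem[OF that]
    consider r where "v = u @ r" | r where "u = v @ r" | "\<not> prefix u v" "\<not> prefix v u"
      by (metis prefixE)
    then show ?thesis
    proof cases
      case (1 r)
      then show ?thesis using gen[of "[]"] by (simp add: state_star_below state_perm_act star_Nil)
    qed (simp_all add: state_star_above state_star_apart gen)
  qed
  then have "finitary \<subseteq> {g \<in> W. \<forall>v. state g v \<in> (finitary :: ('a list \<Rightarrow> 'a list) set)}"
    using finitary_gens_subset_W
    by (intro finitary_subset[OF subgroup_state_preimage[OF subgroup_finitary]]) blast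
  then show ?thesis using assms by blast
qed

lemma level_transitive_finitary: "level_transitive (finitary :: ('a::finite list \<Rightarrow> 'a list) set)"
proof -
  have "\<exists>g\<in>finitary. g u = w" if "length u = length w" for u w :: "'a list"
    using that
  proof (induction u arbitrary: w)
    case Nil
    then show ?case by (intro bexI[of _ id]) simp_all
  next
    case (Cons x u)
    then obtain y w' where w: "w = y # w'" "length u = length w'" by (cases w) auto
    with Cons.IH obtain g where g: "g \<in> finitary" "g u = w'" by blast
    have "perm_act (transpose x y) \<in> finitary"
      using finitary_gen_mem[of "transpose x y" "[]"] by (simp add: star_Nil)
    then have "perm_act (transpose x y) \<circ> star [x] g \<in> finitary"
      using subgroup_comp_closed[OF subgroup_finitary _ star_mem_finitary[OF g(1)]] by blast
    moreover have "star [x] g (x # u) = x # w'"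
      using star_append[of "[x]" g u] g(2) by simp
    then have "(perm_act (transpose x y) \<circ> star [x] g) (x # u) = w"
      using w(1) by (simp add: perm_act_def)
    ultimately show ?case by blast
  qed
  then show ?thesis unfolding level_transitive_def by simp
qed

lemma layered_finitary: "layered (finitary :: ('a::finite list \<Rightarrow> 'a list) set)"
  unfolding layered_def using subgroup_finitary level_transitive_finitary star_mem_finitary by blast

lemma layered_W: "layered (W :: ('a::finite list \<Rightarrow> 'a list) set)"
proof -
  have "level_transitive (W :: ('a list \<Rightarrow> 'a list) set)"
    using level_transitive_finitary finitary_subset_W unfolding level_transitive_def by blast
  then show ?thesis unfolding layered_def using subgroup_W by (auto simp: W_def tree_aut_star)
qed

section \<open>Cycle lengths on a level\<close>

lemma finite_level: "finite {w :: 'a::finite list. length w = n}"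
  using finite_lists_length_eq[of "UNIV :: 'a set" n] by simp

lemma least_power_tree_aut:
  assumes "tree_aut (g :: 'a::finite list \<Rightarrow> 'a list)"
  shows "0 < least_power g u" "(g ^^ least_power g u) u = u"
    and "least_power g u \<le> card {w :: 'a list. length w = length u}"
proof -
  have "g ` {w. length w = length u} \<subseteq> {w. length w = length u}"
    using length_tree_aut[OF assms] by auto
  then obtain l where l: "0 < l" "l \<le> card {w :: 'a list. length w = length u}" "(g ^^ l) u = u"
    using funpow_returns_within_card[OF bij_is_inj[OF tree_aut_bij[OF assms]] finite_level]
    by blast
  then show "0 < least_power g u" "(g ^^ least_power g u) u = u"
    "least_power g u \<le> card {w :: 'a list. length w = length u}"
    using least_powerI[OF l(3,1)] least_power_le[OF l(3,1)] by auto
qed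

lemma least_power_conj:
  assumes "bij t"
  shows "least_power (fun_inv t \<circ> g \<circ> t) v = least_power g (t v)"
proof -
  have pow: "((fun_inv t \<circ> g \<circ> t) ^^ n) v = fun_inv t ((g ^^ n) (t v))" for n
    by (induction n) (simp_all add: assms bij_is_inj bij_is_surj surj_f_inv_f)
  have "((fun_inv t \<circ> g \<circ> t) ^^ n) v = v \<longleftrightarrow> (g ^^ n) (t v) = t v" for n
    using bij_inv_eq_iff[OF assms] by (metis pow)
  then show ?thesis by (simp add: least_power_def)
qed

definition level_periods :: "('a list \<Rightarrow> 'a list) set \<Rightarrow> nat \<Rightarrow> nat set" where
  "level_periods G n = {least_power g u | g u. g \<in> G \<and> length u = n}"

lemma level_periodsI: "g \<in> G \<Longrightarrow> length u = n \<Longrightarrow> least_power g u \<in> level_periods G n"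
  unfolding level_periods_def by blast

lemma finite_nonempty_level_periods:
  fixes G :: "('a::finite list \<Rightarrow> 'a list) set"
  assumes "\<And>g. g \<in> G \<Longrightarrow> tree_aut g" "id \<in> G"
  shows "finite (level_periods G n)" "level_periods G n \<noteq> {}" "0 \<notin> level_periods G n"
proof -
  have "level_periods G n \<subseteq> {..card {w :: 'a list. length w = n}}"
    unfolding level_periods_def using least_power_tree_aut(3)[OF assms(1)] by auto
  then show "finite (level_periods G n)" using finite_subset by blast
  have "least_power id (replicate n undefined :: 'a list) \<in> level_periods G n"
    using assms(2) by (simp add: level_periodsI)
  then show "level_periods G n \<noteq> {}" by blast
  show "0 \<notin> level_periods G n"
    unfolding level_periods_def using least_power_tree_aut(1)[OF assms(1)] by auto
qed

lemma funpow_Lcm_level_periods: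
  assumes "tree_aut (g :: 'a::finite list \<Rightarrow> 'a list)" "g \<in> G" "length u = n"
  shows "(g ^^ Lcm (level_periods G n)) u = u"
proof -
  have "least_power g u dvd Lcm (level_periods G n)"
    using assms(2,3) by (simp add: dvd_Lcm level_periodsI)
  then obtain k where "Lcm (level_periods G n) = least_power g u * k" by (elim dvdE)
  moreover have "((g ^^ least_power g u) ^^ k) u = u" for k
    using least_power_tree_aut(2)[OF assms(1)] by (induction k) simp_all
  ultimately show ?thesis by (simp add: funpow_mult)
qed

section \<open>Layered self-similar groups are saturated\<close>

lemma subgroup_states_at_fixed_vertex:
  fixes H :: "('a::finite list \<Rightarrow> 'a list) set"
  assumes H: "subgroup H (tgrp W)" and fixed: "\<And>h. h \<in> H \<Longrightarrow> h v = v"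
  shows "subgroup {state h v | h. h \<in> H} (tgrp W)"
proof (rule subgroup_tgrp_WI)
  show "id \<in> {state h v | h. h \<in> H}"
    by (intro CollectI exI[of _ id]) (simp add: state_id subgroup_id_closed[OF H])
next
  fix k assume "k \<in> {state h v | h. h \<in> H}"
  then obtain h where h: "h \<in> H" "k = state h v" by blast
  have h_aut: "tree_aut h" by (rule subgroup_tree_aut[OF H h(1)])
  then show "tree_aut k" using h(2) by (simp add: tree_aut_state)
  have "fun_inv h v = v" using fixed[OF h(1)] bij_inv_eq_iff[OF tree_aut_bij[OF h_aut]] by metis
  then have "fun_inv k = state (fun_inv h) v" using state_fun_inv[OF h_aut, of v] h(2) by simp
  then show "fun_inv k \<in> {state h v | h. h \<in> H}"
    by (intro CollectI exI[of _ "fun_inv h"]) (simp add: subgroup_fun_inv_closed[OF H h(1)])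
next
  fix k1 k2 assume "k1 \<in> {state h v | h. h \<in> H}" "k2 \<in> {state h v | h. h \<in> H}"
  then obtain h1 h2 where h: "h1 \<in> H" "k1 = state h1 v" "h2 \<in> H" "k2 = state h2 v" by blast
  have "k1 \<circ> k2 = state (h1 \<circ> h2) v"
    using state_comp[OF subgroup_tree_aut[OF H h(1)] subgroup_tree_aut[OF H h(3)]] fixed[OF h(3)] h
    by simp
  then show "k1 \<circ> k2 \<in> {state h v | h. h \<in> H}"
    by (intro CollectI exI[of _ "h1 \<circ> h2"]) (simp add: subgroup_comp_closed[OF H h(1,3)])
qed

text \<open>Until \<open>c\<close> returns to \<open>v\<close>, the factor \<open>v * k\<close> acts only once, at the first step.\<close>
lemma funpow_comp_star_apply:
  assumes c: "tree_aut c" and j: "0 < j" "j \<le> least_power c v"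
  shows "((c \<circ> star v k) ^^ j) (v @ w) = (c ^^ j) (v @ k w)"
  using j
proof (induction j rule: nat_induct_non_zero)
  case 1 then show ?case by simp
next
  case (Suc j)
  have "(c ^^ j) v \<noteq> v"
  proof
    assume "(c ^^ j) v = v"
    then have "least_power c v \<le> j" using \<open>0 < j\<close> by (rule least_power_le)
    then show False using Suc.prems by simp
  qed
  moreover have "length ((c ^^ j) v) = length v" by (rule length_tree_aut[OF tree_aut_funpow[OF c]])
  ultimately have "\<not> prefix v ((c ^^ j) (v @ k w))"
    by (simp add: tree_aut_append[OF tree_aut_funpow[OF c]] take_length_eq_iff_prefix[symmetric])
  then show ?case using Suc by (simp add: star_not_prefix)
qed

lemma state_funpow_comp_star:
  assumes c: "tree_aut c" and k: "tree_aut k"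
    and l: "0 < least_power c v" "(c ^^ least_power c v) v = v"
  shows "((c \<circ> star v k) ^^ least_power c v) v = v"
    and "state ((c \<circ> star v k) ^^ least_power c v) v = state (c ^^ least_power c v) v \<circ> k"
proof -
  let ?l = "least_power c v"
  have apply_below: "((c \<circ> star v k) ^^ ?l) (v @ w) = v @ state (c ^^ ?l) v (k w)" for w
    using funpow_comp_star_apply[OF c l(1) order_refl] tree_aut_append[OF tree_aut_funpow[OF c]] l(2)
    by simp
  have "state (c ^^ ?l) v (k []) = []"
    using k length_tree_aut[OF tree_aut_funpow[OF c]] by (simp add: tree_aut_def state_def)
  then show "((c \<circ> star v k) ^^ ?l) v = v" using apply_below[of "[]"] by simp
  show "state ((c \<circ> star v k) ^^ ?l) v = state (c ^^ ?l) v \<circ> k"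
    by (simp add: fun_eq_iff state_def apply_below)
qed

lemma level_transitive_mono: "level_transitive G \<Longrightarrow> G \<subseteq> T \<Longrightarrow> level_transitive T"
  unfolding level_transitive_def by blast

locale layered_self_similar =
  fixes G :: "('a::finite list \<Rightarrow> 'a list) set"
  assumes layered: "layered G"
    and state_closed: "\<And>g v. g \<in> G \<Longrightarrow> state g v \<in> G"
begin

lemma subgroup: "subgroup G (tgrp W)"
  using layered by (simp add: layered_def)

lemma tree_aut: "g \<in> G \<Longrightarrow> tree_aut g"
  by (rule subgroup_tree_aut[OF subgroup])

lemma star_closed: "g \<in> G \<Longrightarrow> star v g \<in> G"
proof (induction v)
  case Nil then show ?case by (simp add: star_Nil)
next
  case (Cons x v)
  then have "star [x] (star v g) \<in> G" using layered by (simp add: layered_def)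
  then show ?case by (simp add: star_star)
qed

lemma exists_funpow_with_state:
  assumes g: "g \<in> G" and u: "length u = length v" and k: "k \<in> G"
  shows "\<exists>a\<in>G. (a ^^ least_power g u) v = v \<and> state (a ^^ least_power g u) v = k"
proof -
  obtain t where t: "t \<in> G" "t v = u"
    using layered u unfolding layered_def level_transitive_def by blast
  define c where "c = fun_inv t \<circ> g \<circ> t"
  have c: "c \<in> G" unfolding c_def
    by (intro subgroup_comp_closed[OF subgroup] subgroup_fun_inv_closed[OF subgroup] g t(1))
  have lc: "least_power c v = least_power g u"
    unfolding c_def using least_power_conj[OF tree_aut_bij[OF tree_aut[OF t(1)]]] t(2) by simp
  define s where "s = state (c ^^ least_power c v) v"
  have s: "s \<in> G" unfolding s_def by (intro state_closed subgroup_funpow_closed[OF subgroup c])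
  define a where "a = c \<circ> star v (fun_inv s \<circ> k)"
  have a: "a \<in> G" unfolding a_def
    by (intro subgroup_comp_closed[OF subgroup] star_closed c subgroup_fun_inv_closed[OF subgroup] s k)
  have "tree_aut (fun_inv s \<circ> k)"
    by (intro tree_aut_comp tree_aut_fun_inv tree_aut s k)
  then have "(a ^^ least_power c v) v = v" "state (a ^^ least_power c v) v = s \<circ> (fun_inv s \<circ> k)"
    unfolding a_def s_def
    using state_funpow_comp_star[OF tree_aut[OF c] _ least_power_tree_aut(1,2)[OF tree_aut[OF c]]]
    by blast+
  moreover have "s \<circ> (fun_inv s \<circ> k) = k"
    using tree_aut_comp_fun_inv[OF tree_aut[OF s]] by (simp add: comp_assoc[symmetric])
  ultimately show ?thesis using a lc by auto
qed

definition level_power_subgroup :: "nat \<Rightarrow> ('a list \<Rightarrow> 'a list) set" where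
  "level_power_subgroup n = generate (tgrp G) {g ^^ Lcm (level_periods G n) | g. g \<in> G}"

lemma funpow_subset_carrier: "{g ^^ e | g. g \<in> G} \<subseteq> carrier (tgrp G)"
  using subgroup_funpow_closed[OF subgroup] by auto

lemma characteristic_level_power_subgroup: "characteristic (level_power_subgroup n) (tgrp G)"
  using group.characteristic_generate_nat_pow[OF group_tgrp_subgroup[OF subgroup]]
  by (simp add: level_power_subgroup_def nat_pow_tgrp)

lemma subgroup_level_power_subgroup: "subgroup (level_power_subgroup n) (tgrp W)"
  unfolding level_power_subgroup_def
  using subgroup_tgrp_W_of_tgrp[OF subgroup
      group.generate_is_subgroup[OF group_tgrp_subgroup[OF subgroup] funpow_subset_carrier]] .

lemma level_power_subgroup_fixes:
  assumes "h \<in> level_power_subgroup n" "length u = n"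
  shows "h u = u"
proof -
  have "{g ^^ Lcm (level_periods G n) | g. g \<in> G} \<subseteq> {h \<in> G. \<forall>u. length u = n \<longrightarrow> h u = u}"
    by (auto simp: funpow_Lcm_level_periods tree_aut subgroup_funpow_closed[OF subgroup])
  then have "level_power_subgroup n \<subseteq> {h \<in> G. \<forall>u. length u = n \<longrightarrow> h u = u}"
    unfolding level_power_subgroup_def
    by (rule group.generate_subgroup_incl[OF group_tgrp_subgroup[OF subgroup] _
          subgroup_level_stabilizer[OF subgroup]])
  then show ?thesis using assms by blast
qed

lemma funpow_Lcm_div_mem_states:
  assumes l: "l \<in> level_periods G n" and v: "length v = n" and k: "k \<in> G"
  shows "k ^^ (Lcm (level_periods G n) div l) \<in> {state h v | h. h \<in> level_power_subgroup n}"
proof -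
  define E where "E = Lcm (level_periods G n)"
  obtain g u where g: "g \<in> G" "length u = n" "l = least_power g u"
    using l by (auto simp: level_periods_def)
  have "length u = length v" using g(2) v by simp
  then have "\<exists>a\<in>G. (a ^^ l) v = v \<and> state (a ^^ l) v = k"
    unfolding g(3) by (rule exists_funpow_with_state[OF g(1) _ k])
  then obtain a where a: "a \<in> G" "(a ^^ l) v = v" "state (a ^^ l) v = k" by blast
  have "l dvd E" using l by (simp add: E_def dvd_Lcm)
  then have "a ^^ E = (a ^^ l) ^^ (E div l)" by (simp add: funpow_mult)
  then have "state (a ^^ E) v = k ^^ (E div l)"
    using state_funpow[OF tree_aut_funpow[OF tree_aut[OF a(1)]] a(2)] a(3) by simp
  moreover have "a ^^ E \<in> level_power_subgroup n"
    unfolding level_power_subgroup_def E_def using a(1) by (blast intro: generate.incl)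
  ultimately show ?thesis unfolding E_def[symmetric] by (intro CollectI exI[of _ "a ^^ E"]) simp
qed

lemma states_level_power_subgroup:
  assumes v: "length v = n" and k: "k \<in> G"
  shows "k \<in> {state h v | h. h \<in> level_power_subgroup n}"
proof -
  define E where "E = Lcm (level_periods G n)"
  define T where "T = {state h v | h. h \<in> level_power_subgroup n}"
  have T: "subgroup T (tgrp W)"
    unfolding T_def using v
    by (intro subgroup_states_at_fixed_vertex subgroup_level_power_subgroup level_power_subgroup_fixes)
  have pow: "k ^^ (E div l) \<in> T" if "l \<in> level_periods G n" for l
    unfolding E_def T_def using that v k by (rule funpow_Lcm_div_mem_states)
  have kW: "k \<in> carrier (tgrp W)" using tree_aut[OF k] by (simp add: W_def)
  let ?M = "(\<lambda>l. int (E div l)) ` level_periods G n"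
  have periods: "finite (level_periods G n)" "level_periods G n \<noteq> {}" "0 \<notin> level_periods G n"
    using finite_nonempty_level_periods[OF tree_aut subgroup_id_closed[OF subgroup]] by blast+
  have "k [^]\<^bsub>tgrp W\<^esub> Gcd ?M \<in> T"
    using periods(1) pow
    by (intro group.int_pow_Gcd_mem_subgroup[OF group_tgrp_W T kW]) (auto simp: int_pow_int nat_pow_tgrp)
  moreover have "Gcd ?M = 1"
    using Gcd_Lcm_div_eq_1[OF periods] by (simp add: E_def image_image[symmetric])
  ultimately have "k \<in> T" using group.int_pow_1[OF group_tgrp_W kW] by simp
  then show ?thesis unfolding T_def .
qed

theorem saturated: "saturated G"
  unfolding saturated_def
proof (intro conjI allI)
  show "subgroup G (tgrp W)" by (rule subgroup)
  fix n
  have "level_transitive {state h v | h. h \<in> level_power_subgroup n}" if "length v = n" for v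
  proof (rule level_transitive_mono)
    show "level_transitive G" using layered by (simp add: layered_def)
    show "G \<subseteq> {state h v | h. h \<in> level_power_subgroup n}"
      using states_level_power_subgroup[OF that] by blast
  qed
  then show "\<exists>H. characteristic H (tgrp G) \<and> (\<forall>h\<in>H. \<forall>u. length u = n \<longrightarrow> h u = u) \<and>
      (\<forall>v. length v = n \<longrightarrow> level_transitive {state h v | h. h \<in> H})"
    using characteristic_level_power_subgroup level_power_subgroup_fixes
    by (intro exI[of _ "level_power_subgroup n"]) blast
qed

end

theorem proposition3p10:
  assumes "card (UNIV :: 'a::finite set) \<ge> 2"
  shows "layered (finitary :: ('a list \<Rightarrow> 'a list) set) \<and> saturated (finitary :: ('a list \<Rightarrow> 'a list) set)
         \<and> layered (W :: ('a list \<Rightarrow> 'a list) set) \<and> saturated (W :: ('a list \<Rightarrow> 'a list) set)"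
proof -
  interpret F: layered_self_similar "finitary :: ('a list \<Rightarrow> 'a list) set"
    by unfold_locales (simp_all add: layered_finitary state_mem_finitary)
  interpret W: layered_self_similar "W :: ('a list \<Rightarrow> 'a list) set"
    by unfold_locales (rule layered_W, simp add: W_def tree_aut_state)
  show ?thesis using layered_finitary layered_W F.saturated W.saturated by blast
qed

end
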